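(* Let $X,X_1,X_2,\dots,X_n$ be i.i.d. random variables. Fix $q$ with $0<q<1$ and let $q^*=2-q$. Let $A(a)=\mathbb{E}\exp_q(aX)$ and assume $A(a)$ is finite for all $a>0$. If $a>0$ and $x>\frac1a\ln_q(A(a))$, then $$\mathrm{Prob}\left(\frac1n\sum_{k=1}^nX_k\ge x\right)\le\eta_n(y),\qquad y=aA(a)^{1-q^*}x-\ln_{q^*}A(a).$$
   Context: For $q\in(0,2)$, $q\ne1$: $\ln_q(u)=\frac{1}{1-q}(u^{1-q}-1)$ for $u>0$, and $\exp_q(u)=[1+(1-q)u]_+^{1/(1-q)}$ for real $u$ (value in $[0,+\infty]$), where $[u]_+=\max(u,0)$. The function $\eta_n$ is defined as follows: let $\eta(x)=\exp_{q^*}(-x)$ for $x\ge0$ and $\eta(x)=1$ for $x\le0$; let $Z_1,\dots,Z_n$ be i.i.d. random variables with density $[\exp_{q^*}(-z)]^{q^*}$ for $z>0$ and $0$ for $z<0$ (so $\mathrm{Prob}(Z_k\ge z)=\eta(z)$); then $\eta_n(y)=\mathrm{Prob}\left(\frac1n\sum_{k=1}^nZ_k\ge y\right)$. *)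

theory Defs
  imports "HOL-Probability.Probability"
begin

definition lnq :: "real \<Rightarrow> real \<Rightarrow> real" where
  "lnq q u = (u powr (1 - q) - 1) / (1 - q)"

text \<open>This agrees with the
  paper's definition whenever the value is finite, i.e. always for q < 1, and for
  q > 1 whenever 1+(1-q)u > 0 (the only case used below).\<close>
definition expq :: "real \<Rightarrow> real \<Rightarrow> real" where
  "expq q u = (max (1 + (1 - q) * u) 0) powr (1 / (1 - q))"

definition Zdist :: "real \<Rightarrow> real measure" where
  "Zdist qs = density lborel
     (\<lambda>z. ennreal (if z > 0 then (expq qs (- z)) powr qs else 0))"

text \<open>eta_n(y) = Prob((1/n) sum_{k=1}^n Z_k \<ge> y), Z_1..Z_n i.i.d. with law Zdist
  (realised on the product space; the indices are 0..n-1).\<close>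
definition eta_n :: "real \<Rightarrow> nat \<Rightarrow> real \<Rightarrow> real" where
  "eta_n qs n y = measure (PiM {..<n} (\<lambda>_. Zdist qs))
      {z \<in> space (PiM {..<n} (\<lambda>_. Zdist qs)). (\<Sum>k<n. z k) / real n \<ge> y}"

end

theory Submission
  imports Defs "HOL-Real_Asymp.Real_Asymp"
begin

text \<open>Write \<open>A = E exp\<^sub>q(a X)\<close>. Markov's inequality for \<open>exp\<^sub>q(a X)\<close> shows that the increasing
  affine image \<open>Y = a A powr (q - 1) X - ln\<^sub>2\<^sub>-\<^sub>q A\<close> of \<open>X\<close> has tail
  \<open>P(Y \<ge> t) \<le> (1 + (1 - q) t) powr (-1 / (1 - q)) = P(Z \<ge> t)\<close>, so \<open>Y\<close> is stochastically
  dominated by \<open>Z\<close>. Stochastic domination of the summands passes to sums of independent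
  variables (integrate out one coordinate at a time by Fubini), and the mean of the \<open>X\<^sub>k\<close>
  exceeds \<open>x\<close> only if the mean of the \<open>Y\<^sub>k\<close> exceeds \<open>y\<close>.\<close>

section \<open>The distribution of \<open>Z\<close>\<close>

lemma expq_nonneg: "expq q u \<ge> 0"
  by (simp add: expq_def)

lemma borel_measurable_expq [measurable]: "expq q \<in> borel_measurable borel"
  unfolding expq_def by measurable

lemma sets_Zdist [simp, measurable_cong]: "sets (Zdist qs) = sets borel"
  by (simp add: Zdist_def)

lemma Zdist_density_eq:
  assumes q: "0 < q" "q < 1" and z: "z \<ge> 0"
  shows "expq (2 - q) (- z) powr (2 - q) = (1 + (1 - q) * z) powr (- (1 / (1 - q)) - 1)"
proof -
  have pos: "1 + (1 - q) * z > 0"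
    using q z by (smt (verit) mult_nonneg_nonneg)
  have "1 + (1 - (2 - q)) * - z = 1 + (1 - q) * z" "1 / (1 - (2 - q)) = - (1 / (1 - q))"
    using q by (simp_all add: algebra_simps divide_simps)
  then have "expq (2 - q) (- z) = (1 + (1 - q) * z) powr (- (1 / (1 - q)))"
    using pos unfolding expq_def by (simp add: max_def)
  moreover have "- (1 / (1 - q)) * (2 - q) = - (1 / (1 - q)) - 1"
    using q by (simp add: field_simps)
  ultimately show ?thesis
    using pos by (simp add: powr_powr)
qed

lemma nn_integral_Zdist_density_atLeast:
  assumes q: "0 < q" "q < 1" and t: "t \<ge> 0"
  shows "(\<integral>\<^sup>+z. ennreal ((1 + (1 - q) * z) powr (- (1 / (1 - q)) - 1)) * indicator {t..} z \<partial>lborel)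
     = ennreal ((1 + (1 - q) * t) powr (- (1 / (1 - q))))"
proof -
  let ?p = "1 / (1 - q)"
  let ?F = "\<lambda>z. - ((1 + (1 - q) * z) powr (- ?p))"
  have "(\<integral>\<^sup>+z. ennreal ((1 + (1 - q) * z) powr (- ?p - 1)) * indicator {t..} z \<partial>lborel)
     = ennreal (0 - ?F t)"
  proof (rule nn_integral_FTC_atLeast)
    fix z assume "t \<le> z"
    then have pos: "1 + (1 - q) * z > 0"
      using q t by (smt (verit) mult_nonneg_nonneg)
    have "DERIV (\<lambda>z. (1 + (1 - q) * z) powr (- ?p)) z
        :> (- ?p) * (1 + (1 - q) * z) powr (- ?p - of_nat 1) * (1 - q)"
      by (rule DERIV_fun_powr[where g="\<lambda>z. 1 + (1 - q) * z", OF _ pos]) (auto intro!: derivative_eq_intros)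
    then show "DERIV ?F z :> (1 + (1 - q) * z) powr (- ?p - 1)"
      using q pos by (auto intro!: derivative_eq_intros)
  next
    have "LIM z at_top. 1 + (1 - q) * z :> at_top"
      using q by real_asymp
    then have "((\<lambda>z. (1 + (1 - q) * z) powr (- ?p)) \<longlongrightarrow> 0) at_top"
      by (rule tendsto_neg_powr[rotated]) (use q in simp)
    then show "(?F \<longlongrightarrow> 0) at_top"
      by (auto intro: tendsto_minus_cancel_left[THEN iffD1])
  qed auto
  then show ?thesis by simp
qed

lemma emeasure_Zdist:
  assumes q: "0 < q" "q < 1" and A: "A \<in> sets borel"
  shows "emeasure (Zdist (2 - q)) A
    = (\<integral>\<^sup>+z. ennreal ((1 + (1 - q) * z) powr (- (1 / (1 - q)) - 1)) * indicator (A \<inter> {0..}) z \<partial>lborel)"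
  unfolding Zdist_def using A
proof (subst emeasure_density, simp_all, intro nn_integral_cong_AE eventually_mono[OF AE_lborel_singleton[of 0]])
  fix z :: real assume "z \<noteq> 0"
  then show "ennreal (if z > 0 then expq (2 - q) (- z) powr (2 - q) else 0) * indicator A z
      = ennreal ((1 + (1 - q) * z) powr (- (1 / (1 - q)) - 1)) * indicator (A \<inter> {0..}) z"
    using Zdist_density_eq[OF q, of z] by (auto simp: indicator_def)
qed

lemma emeasure_Zdist_atLeast:
  assumes "0 < q" "q < 1"
  shows "emeasure (Zdist (2 - q)) {t..} = ennreal ((1 + (1 - q) * max t 0) powr (- (1 / (1 - q))))"
proof -
  have "{t..} \<inter> {0..} = {max t 0..}" by auto
  then show ?thesis
    using assms by (simp add: emeasure_Zdist nn_integral_Zdist_density_atLeast)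
qed

lemma prob_space_Zdist:
  assumes "0 < q" "q < 1"
  shows "prob_space (Zdist (2 - q))"
proof
  have "UNIV \<inter> {0..} = ({max 0 0..} :: real set)" by auto
  moreover have "space (Zdist (2 - q)) = UNIV"
    by (simp add: Zdist_def)
  ultimately show "emeasure (Zdist (2 - q)) (space (Zdist (2 - q))) = 1"
    using assms by (simp add: emeasure_Zdist nn_integral_Zdist_density_atLeast)
qed

section \<open>Tail domination of a single variable\<close>

text \<open>The affine map \<open>u \<mapsto> a A powr (q - 1) u - ln\<^sub>2\<^sub>-\<^sub>q A\<close> is chosen so that
  \<open>1 + (1 - q) (a A powr (q - 1) u - ln\<^sub>2\<^sub>-\<^sub>q A) = A powr (q - 1) (1 + (1 - q) a u)\<close>.\<close>

lemma expq_ge_of_affine_ge: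
  assumes q: "0 < q" "q < 1" and A: "A > 0" and t: "t > 0"
    and le: "t \<le> a * A powr (q - 1) * u - lnq (2 - q) A"
  shows "A * (1 + (1 - q) * t) powr (1 / (1 - q)) \<le> expq q (a * u)"
proof -
  let ?B = "1 + (1 - q) * t"
  have B: "?B > 0"
    using q t by (smt (verit) mult_pos_pos)
  have "(1 - q) * lnq (2 - q) A = 1 - A powr (q - 1)"
    using q unfolding lnq_def by (simp add: field_simps)
  then have "?B \<le> A powr (q - 1) * (1 + (1 - q) * (a * u))"
    using mult_left_mono[OF le, of "1 - q"] q by (simp add: algebra_simps)
  then have "A powr (1 - q) * ?B \<le> A powr (1 - q) * A powr (q - 1) * (1 + (1 - q) * (a * u))"
    by (simp add: mult.assoc mult_left_mono)
  also have "A powr (1 - q) * A powr (q - 1) = 1"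
    using A by (simp add: powr_add[symmetric])
  finally have base: "A powr (1 - q) * ?B \<le> 1 + (1 - q) * (a * u)"
    by simp
  have "A * ?B powr (1 / (1 - q)) = (A powr (1 - q) * ?B) powr (1 / (1 - q))"
    using A B q by (simp add: powr_mult powr_powr)
  also have "\<dots> \<le> (1 + (1 - q) * (a * u)) powr (1 / (1 - q))"
    using base A B q by (intro powr_mono2) auto
  also have "\<dots> = expq q (a * u)"
    using base A B unfolding expq_def
    by (smt (verit) max_def mult_pos_pos powr_gt_zero)
  finally show ?thesis .
qed

lemma tail_le_Zdist_tail:
  assumes "prob_space M" and X[measurable]: "X \<in> borel_measurable M"
    and q: "0 < q" "q < 1" and "a > 0"
    and int: "integrable M (\<lambda>\<omega>. expq q (a * X \<omega>))"
  defines "A \<equiv> integral\<^sup>L M (\<lambda>\<omega>. expq q (a * X \<omega>))"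
  shows "emeasure M {\<omega>\<in>space M. t \<le> a * A powr (q - 1) * X \<omega> - lnq (2 - q) A}
    \<le> emeasure (Zdist (2 - q)) {t..}"
proof -
  interpret prob_space M by fact
  let ?E = "{\<omega>\<in>space M. t \<le> a * A powr (q - 1) * X \<omega> - lnq (2 - q) A}"
  have "A \<ge> 0"
    unfolding A_def by (simp add: expq_nonneg)
  consider "t \<le> 0" | "A = 0" "t > 0" | "A > 0" "t > 0"
    using \<open>A \<ge> 0\<close> by fastforce
  then show ?thesis
  proof cases
    case 1
    then show ?thesis
      using emeasure_Zdist_atLeast[OF q, of t] by (simp add: max_def emeasure_le_1)
  next
    case 2
    then have "lnq (2 - q) A > 0"
      using q unfolding lnq_def by (simp add: divide_simps)
    with 2 have "?E = {}"
      by auto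
    then show ?thesis
      by (metis emeasure_empty zero_le)
  next
    case 3
    let ?m = "A * (1 + (1 - q) * t) powr (1 / (1 - q))"
    have B: "1 + (1 - q) * t > 0"
      using q 3 by (smt (verit) mult_pos_pos)
    have "?E \<subseteq> {\<omega>\<in>space M. ?m \<le> expq q (a * X \<omega>)}"
      using expq_ge_of_affine_ge[OF q 3] by auto
    then have "emeasure M ?E \<le> ennreal (measure M {\<omega>\<in>space M. ?m \<le> expq q (a * X \<omega>)})"
      by (subst emeasure_eq_measure[symmetric]) (rule emeasure_mono, auto)
    also have "\<dots> \<le> ennreal (A / ?m)"
      unfolding A_def using 3 B int
      by (intro ennreal_leI integral_Markov_inequality_measure[where A="space M"])
        (auto simp: expq_nonneg A_def)
    also have "A / ?m = (1 + (1 - q) * t) powr (- (1 / (1 - q)))"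
      using 3 B by (simp add: powr_minus_divide)
    finally show ?thesis
      using emeasure_Zdist_atLeast[OF q, of t] 3 by simp
  qed
qed

section \<open>Sums of independent variables\<close>

lemma borel_measurable_PiM_sum [measurable]:
  fixes D :: "'i \<Rightarrow> real measure"
  assumes "\<And>i. sets (D i) = sets borel"
  shows "(\<lambda>z. \<Sum>i\<in>I. z i) \<in> borel_measurable (PiM I D)"
proof (rule borel_measurable_sum)
  fix i assume "i \<in> I"
  then show "(\<lambda>z. z i) \<in> borel_measurable (PiM I D)"
    using measurable_component_singleton[OF \<open>i \<in> I\<close>, of D]
      measurable_cong_sets[OF refl assms[of i], of "PiM I D"]
    by simp
qed

lemma emeasure_PiM_sum_ge_eq_nn_integral:
  fixes D :: "'i \<Rightarrow> real measure"
  assumes "\<And>i. sets (D i) = sets borel"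
  shows "emeasure (PiM I D) {z\<in>space (PiM I D). s \<le> (\<Sum>i\<in>I. z i)}
       = (\<integral>\<^sup>+z. indicator {s..} (\<Sum>i\<in>I. z i) \<partial>PiM I D)"
proof -
  have "{z\<in>space (PiM I D). s \<le> (\<Sum>i\<in>I. z i)} \<in> sets (PiM I D)"
    using assms by measurable
  moreover have "(\<integral>\<^sup>+z. indicator {s..} (\<Sum>i\<in>I. z i) \<partial>PiM I D)
      = (\<integral>\<^sup>+z. indicator {z\<in>space (PiM I D). s \<le> (\<Sum>i\<in>I. z i)} z \<partial>PiM I D)"
    by (rule nn_integral_cong) (auto simp: indicator_def)
  ultimately show ?thesis
    by simp
qed

lemma nn_integral_PiM_insert_sum_ge:
  fixes D :: "'i \<Rightarrow> real measure"
  assumes "\<And>i. prob_space (D i)" and [measurable_cong]: "\<And>i. sets (D i) = sets borel"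
    and "finite I" "i \<notin> I"
  shows "(\<integral>\<^sup>+z. indicator {s..} (\<Sum>j\<in>insert i I. z j) \<partial>PiM (insert i I) D)
       = (\<integral>\<^sup>+y. (\<integral>\<^sup>+x. indicator {s..} (y + (\<Sum>j\<in>I. x j)) \<partial>PiM I D) \<partial>D i)"
proof -
  interpret product_sigma_finite D
    by (simp add: product_sigma_finite_def assms(1) prob_space_imp_sigma_finite)
  have "(\<Sum>j\<in>insert i I. (x(i := y)) j) = y + (\<Sum>j\<in>I. x j)" for x :: "'i \<Rightarrow> real" and y
    using assms(3,4) by (simp add: sum.insert) (intro sum.cong, auto)
  then show ?thesis
    using assms(3,4) by (subst product_nn_integral_insert_rev) auto
qed

lemma nn_integral_shifted_tail:
  fixes D :: "real measure" and S :: "'a \<Rightarrow> real"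
  assumes "prob_space D" and sets_D [measurable_cong]: "sets D = sets borel"
    and "sigma_finite_measure P" and [measurable]: "S \<in> borel_measurable P"
  shows "(\<integral>\<^sup>+y. (\<integral>\<^sup>+x. indicator {s..} (y + S x) \<partial>P) \<partial>D) = (\<integral>\<^sup>+x. emeasure D {s - S x..} \<partial>P)"
proof -
  interpret pair_sigma_finite D P
    using assms by (simp add: pair_sigma_finite_def prob_space_imp_sigma_finite)
  have shift: "indicator {s..} (y + S x) = (indicator {s - S x..} y :: ennreal)" for x y
    by (auto simp: indicator_def)
  have "(\<integral>\<^sup>+y. (\<integral>\<^sup>+x. indicator {s..} (y + S x) \<partial>P) \<partial>D)
      = (\<integral>\<^sup>+x. (\<integral>\<^sup>+y. indicator {s..} (y + S x) \<partial>D) \<partial>P)"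
    by (rule Fubini'[symmetric]) measurable
  then show ?thesis
    by (simp add: shift sets_D)
qed

lemma nn_integral_PiM_sum_ge_mono:
  fixes D E :: "'i \<Rightarrow> real measure"
  assumes "finite I"
    and D: "\<And>i. prob_space (D i)" "\<And>i. sets (D i) = sets borel"
    and E: "\<And>i. prob_space (E i)" "\<And>i. sets (E i) = sets borel"
    and dom: "\<And>i t. i \<in> I \<Longrightarrow> emeasure (D i) {t..} \<le> emeasure (E i) {t..}"
  shows "(\<integral>\<^sup>+z. indicator {s..} (\<Sum>i\<in>I. z i) \<partial>PiM I D)
       \<le> (\<integral>\<^sup>+z. indicator {s..} (\<Sum>i\<in>I. z i) \<partial>PiM I E)"
  using assms(1) dom
proof (induction I arbitrary: s rule: finite_induct)
  case empty
  then show ?case by (simp add: PiM_empty)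
next
  case (insert i I)
  have shift: "indicator {s..} (y + S) = (indicator {s - y..} S :: ennreal)" for y S :: real
    by (auto simp: indicator_def)
  have sf: "sigma_finite_measure (PiM I E)"
    by (simp add: E prob_space_PiM prob_space_imp_sigma_finite)
  have "(\<integral>\<^sup>+z. indicator {s..} (\<Sum>j\<in>insert i I. z j) \<partial>PiM (insert i I) D)
      = (\<integral>\<^sup>+y. (\<integral>\<^sup>+x. indicator {s - y..} (\<Sum>j\<in>I. x j) \<partial>PiM I D) \<partial>D i)"
    using insert D by (subst nn_integral_PiM_insert_sum_ge) (auto simp: shift)
  also have "\<dots> \<le> (\<integral>\<^sup>+y. (\<integral>\<^sup>+x. indicator {s..} (y + (\<Sum>j\<in>I. x j)) \<partial>PiM I E) \<partial>D i)"
    using insert by (auto intro!: nn_integral_mono simp: shift)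
  also have "\<dots> = (\<integral>\<^sup>+x. emeasure (D i) {s - (\<Sum>j\<in>I. x j)..} \<partial>PiM I E)"
    using D E sf by (intro nn_integral_shifted_tail) auto
  also have "\<dots> \<le> (\<integral>\<^sup>+x. emeasure (E i) {s - (\<Sum>j\<in>I. x j)..} \<partial>PiM I E)"
    using insert by (intro nn_integral_mono) auto
  also have "\<dots> = (\<integral>\<^sup>+y. (\<integral>\<^sup>+x. indicator {s..} (y + (\<Sum>j\<in>I. x j)) \<partial>PiM I E) \<partial>E i)"
    using E sf by (intro nn_integral_shifted_tail[symmetric]) auto
  also have "\<dots> = (\<integral>\<^sup>+z. indicator {s..} (\<Sum>j\<in>insert i I. z j) \<partial>PiM (insert i I) E)"
    using insert E by (subst nn_integral_PiM_insert_sum_ge) auto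
  finally show ?case .
qed

lemma measure_PiM_sum_ge_mono:
  fixes D E :: "'i \<Rightarrow> real measure"
  assumes "finite I"
    and "\<And>i. prob_space (D i)" "\<And>i. sets (D i) = sets borel"
    and "\<And>i. prob_space (E i)" "\<And>i. sets (E i) = sets borel"
    and "\<And>i t. i \<in> I \<Longrightarrow> emeasure (D i) {t..} \<le> emeasure (E i) {t..}"
  shows "measure (PiM I D) {z\<in>space (PiM I D). s \<le> (\<Sum>i\<in>I. z i)}
       \<le> measure (PiM I E) {z\<in>space (PiM I E). s \<le> (\<Sum>i\<in>I. z i)}"
proof -
  interpret D: prob_space "PiM I D"
    using assms by (simp add: prob_space_PiM)
  interpret E: prob_space "PiM I E"
    using assms by (simp add: prob_space_PiM)
  have "(\<integral>\<^sup>+z. indicator {s..} (\<Sum>i\<in>I. z i) \<partial>PiM I D)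
      \<le> (\<integral>\<^sup>+z. indicator {s..} (\<Sum>i\<in>I. z i) \<partial>PiM I E)"
    by (rule nn_integral_PiM_sum_ge_mono) (use assms in auto)
  then show ?thesis
    by (simp add: emeasure_PiM_sum_ge_eq_nn_integral[symmetric] assms D.emeasure_eq_measure
        E.emeasure_eq_measure)
qed

lemma (in prob_space) prob_sum_ge_eq_PiM:
  fixes X :: "'i \<Rightarrow> 'a \<Rightarrow> real"
  assumes "I \<noteq> {}" and indep: "indep_vars (\<lambda>_. borel) X I"
    and rv: "\<And>i. i \<in> I \<Longrightarrow> random_variable borel (X i)"
    and distr: "\<And>i. i \<in> I \<Longrightarrow> distr M borel (X i) = D i"
  shows "prob {\<omega>\<in>space M. s \<le> (\<Sum>i\<in>I. X i \<omega>)}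
    = measure (PiM I D) {z\<in>space (PiM I D). s \<le> (\<Sum>i\<in>I. z i)}"
proof -
  let ?X = "\<lambda>\<omega>. \<lambda>i\<in>I. X i \<omega>"
  have "distr M (PiM I (\<lambda>_. borel)) ?X = PiM I (\<lambda>i. distr M borel (X i))"
    using indep_vars_iff_distr_eq_PiM'[of I X "\<lambda>_. borel"] assms by blast
  also have "\<dots> = PiM I D"
    using distr by (intro PiM_cong) auto
  finally have PiM_eq: "PiM I D = distr M (PiM I (\<lambda>_. borel)) ?X" ..
  have X_meas: "?X \<in> measurable M (PiM I (\<lambda>_. borel))"
    using rv by (intro measurable_restrict) auto
  have "{z\<in>space (PiM I (\<lambda>_. borel)). s \<le> (\<Sum>i\<in>I. z i)} \<in> sets (PiM I (\<lambda>_. borel))"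
    by measurable
  then have "measure (PiM I D) {z\<in>space (PiM I D). s \<le> (\<Sum>i\<in>I. z i)}
      = prob (?X -` {z\<in>space (PiM I (\<lambda>_. borel)). s \<le> (\<Sum>i\<in>I. z i)} \<inter> space M)"
    unfolding PiM_eq by (simp add: measure_distr[OF X_meas])
  also have "?X -` {z\<in>space (PiM I (\<lambda>_. borel)). s \<le> (\<Sum>i\<in>I. z i)} \<inter> space M
      = {\<omega>\<in>space M. s \<le> (\<Sum>i\<in>I. X i \<omega>)}"
    by (auto simp: space_PiM)
  finally show ?thesis ..
qed

lemma (in prob_space) prob_indep_sum_ge_le:
  fixes X :: "'i \<Rightarrow> 'a \<Rightarrow> real"
  assumes "finite I" "I \<noteq> {}" and indep: "indep_vars (\<lambda>_. borel) X I"
    and rv: "\<And>i. i \<in> I \<Longrightarrow> random_variable borel (X i)"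
    and Z: "prob_space Z" "sets Z = sets borel"
    and dom: "\<And>i t. i \<in> I \<Longrightarrow> emeasure M {\<omega>\<in>space M. t \<le> X i \<omega>} \<le> emeasure Z {t..}"
  shows "prob {\<omega>\<in>space M. s \<le> (\<Sum>i\<in>I. X i \<omega>)}
    \<le> measure (PiM I (\<lambda>_. Z)) {z\<in>space (PiM I (\<lambda>_. Z)). s \<le> (\<Sum>i\<in>I. z i)}"
proof -
  \<comment> \<open>Outside \<open>I\<close> the marginals are replaced by a point mass, so that all of them are
    probability measures.\<close>
  define D where "D i = distr M borel (if i \<in> I then X i else (\<lambda>_. 0))" for i
  have D: "prob_space (D i)" "sets (D i) = sets borel" for i
    unfolding D_def using rv by (intro prob_space_distr, auto)
  have "prob {\<omega>\<in>space M. s \<le> (\<Sum>i\<in>I. X i \<omega>)}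
      = measure (PiM I D) {z\<in>space (PiM I D). s \<le> (\<Sum>i\<in>I. z i)}"
    using assms(2) indep rv by (rule prob_sum_ge_eq_PiM) (auto simp: D_def)
  also have "\<dots> \<le> measure (PiM I (\<lambda>_. Z)) {z\<in>space (PiM I (\<lambda>_. Z)). s \<le> (\<Sum>i\<in>I. z i)}"
  proof (rule measure_PiM_sum_ge_mono)
    fix i t assume "i \<in> I"
    then have "emeasure (D i) {t..} = emeasure M {\<omega>\<in>space M. t \<le> X i \<omega>}"
      using rv unfolding D_def by (subst emeasure_distr) (auto intro!: arg_cong[where f="emeasure M"])
    with dom \<open>i \<in> I\<close> show "emeasure (D i) {t..} \<le> emeasure Z {t..}"
      by simp
  qed (use assms(1) D Z in auto)
  finally show ?thesis .
qed

lemma (in prob_space) emeasure_Collect_eq_of_distr_eq: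
  assumes "random_variable borel X" "random_variable borel X'"
    and "distr M borel X = distr M borel X'" and "{u. P u} \<in> sets borel"
  shows "emeasure M {\<omega>\<in>space M. P (X \<omega>)} = emeasure M {\<omega>\<in>space M. P (X' \<omega>)}"
proof -
  have eq: "emeasure M {\<omega>\<in>space M. P (Y \<omega>)} = emeasure (distr M borel Y) {u. P u}"
    if "random_variable borel Y" for Y
    using that assms(4) by (subst emeasure_distr) (auto intro!: arg_cong[where f="emeasure M"])
  show ?thesis
    using eq[OF assms(1)] eq[OF assms(2)] assms(3) by simp
qed

lemma measure_PiM_sum_ge_reindex:
  fixes D :: "real measure"
  assumes "prob_space D" and [measurable_cong]: "sets D = sets borel" and f: "bij_betw f I J"
  shows "measure (PiM I (\<lambda>_. D)) {z\<in>space (PiM I (\<lambda>_. D)). s \<le> (\<Sum>i\<in>I. z i)}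
    = measure (PiM J (\<lambda>_. D)) {z\<in>space (PiM J (\<lambda>_. D)). s \<le> (\<Sum>j\<in>J. z j)}"
proof -
  let ?t = "\<lambda>\<omega>. \<lambda>i\<in>I. \<omega> (f i)"
  have t_meas: "?t \<in> measurable (PiM J (\<lambda>_. D)) (PiM I (\<lambda>_. D))"
    using f by (intro measurable_restrict measurable_component_singleton) (auto simp: bij_betw_def)
  have PiM_eq: "distr (PiM J (\<lambda>_. D)) (PiM I (\<lambda>_. D)) ?t = PiM I (\<lambda>_. D)"
    using assms f by (intro distr_PiM_reindex) (auto simp: bij_betw_def)
  have "{z\<in>space (PiM I (\<lambda>_. D)). s \<le> (\<Sum>i\<in>I. z i)} \<in> sets (PiM I (\<lambda>_. D))"
    by measurable
  then have "measure (PiM I (\<lambda>_. D)) {z\<in>space (PiM I (\<lambda>_. D)). s \<le> (\<Sum>i\<in>I. z i)}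
      = measure (PiM J (\<lambda>_. D)) (?t -` {z\<in>space (PiM I (\<lambda>_. D)). s \<le> (\<Sum>i\<in>I. z i)} \<inter> space (PiM J (\<lambda>_. D)))"
    by (subst PiM_eq[symmetric]) (simp add: measure_distr[OF t_meas])
  also have "?t -` {z\<in>space (PiM I (\<lambda>_. D)). s \<le> (\<Sum>i\<in>I. z i)} \<inter> space (PiM J (\<lambda>_. D))
      = {z\<in>space (PiM J (\<lambda>_. D)). s \<le> (\<Sum>j\<in>J. z j)}"
    using f measurable_space[OF t_meas] by (auto simp: sum.reindex_bij_betw)
  finally show ?thesis .
qed

lemma (in prob_space) prob_mean_ge_le_eta_n:
  assumes "n \<ge> 1" and q: "0 < q" "q < 1"
    and indep: "indep_vars (\<lambda>_. borel) Y {1..n}"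
    and rv: "\<And>k. k \<in> {1..n} \<Longrightarrow> random_variable borel (Y k)"
    and dom: "\<And>k t. k \<in> {1..n} \<Longrightarrow> emeasure M {\<omega>\<in>space M. t \<le> Y k \<omega>} \<le> emeasure (Zdist (2 - q)) {t..}"
  shows "prob {\<omega>\<in>space M. y \<le> (\<Sum>k=1..n. Y k \<omega>) / real n} \<le> eta_n (2 - q) n y"
proof -
  let ?Z = "Zdist (2 - q)"
  have n: "real n > 0"
    using \<open>n \<ge> 1\<close> by simp
  have "prob {\<omega>\<in>space M. y \<le> (\<Sum>k=1..n. Y k \<omega>) / real n}
      = prob {\<omega>\<in>space M. real n * y \<le> (\<Sum>k\<in>{1..n}. Y k \<omega>)}"
    using n by (intro arg_cong[where f=prob]) (auto simp: field_simps)
  also have "\<dots> \<le> measure (PiM {1..n} (\<lambda>_. ?Z))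
      {z\<in>space (PiM {1..n} (\<lambda>_. ?Z)). real n * y \<le> (\<Sum>k\<in>{1..n}. z k)}"
    using \<open>n \<ge> 1\<close> indep rv dom prob_space_Zdist[OF q] by (intro prob_indep_sum_ge_le) auto
  also have "\<dots> = measure (PiM {..<n} (\<lambda>_. ?Z))
      {z\<in>space (PiM {..<n} (\<lambda>_. ?Z)). real n * y \<le> (\<Sum>k<n. z k)}"
    using prob_space_Zdist[OF q]
    by (intro measure_PiM_sum_ge_reindex[where f=Suc, symmetric]) (auto simp: image_Suc_lessThan)
  also have "\<dots> = eta_n (2 - q) n y"
    unfolding eta_n_def using n by (intro arg_cong[where f="measure _"]) (auto simp: field_simps)
  finally show ?thesis .
qed

theorem proposition9:
  fixes M :: "'w measure" and Xs :: "nat \<Rightarrow> 'w \<Rightarrow> real"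
    and q a x :: real and n :: nat
  assumes "prob_space M"
    and "n \<ge> 1"
    and "\<And>k. k \<le> n \<Longrightarrow> Xs k \<in> borel_measurable M"
    and "prob_space.indep_vars M (\<lambda>_. borel) Xs {0..n}"
    and "\<And>k. k \<le> n \<Longrightarrow> distr M borel (Xs k) = distr M borel (Xs 0)"
    and "0 < q" and "q < 1"
    and "\<And>b. b > 0 \<Longrightarrow> integrable M (\<lambda>\<omega>. expq q (b * Xs 0 \<omega>))"
    and "a > 0"
    and "x > (1 / a) * lnq q (integral\<^sup>L M (\<lambda>\<omega>. expq q (a * Xs 0 \<omega>)))"
  shows "measure M {\<omega> \<in> space M. (\<Sum>k=1..n. Xs k \<omega>) / real n \<ge> x}
     \<le> eta_n (2 - q) n
          (a * (integral\<^sup>L M (\<lambda>\<omega>. expq q (a * Xs 0 \<omega>))) powr (1 - (2 - q)) * x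
           - lnq (2 - q) (integral\<^sup>L M (\<lambda>\<omega>. expq q (a * Xs 0 \<omega>))))"
proof -
  interpret prob_space M by fact
  note q = \<open>0 < q\<close> \<open>q < 1\<close>
  define A where "A = expectation (\<lambda>\<omega>. expq q (a * Xs 0 \<omega>))"
  define c where "c = a * A powr (q - 1)"
  define y where "y = c * x - lnq (2 - q) A"
  define Y where "Y k \<omega> = c * Xs k \<omega> - lnq (2 - q) A" for k \<omega>
  have Y_rv: "random_variable borel (Y k)" if "k \<le> n" for k
    using assms(3)[OF that] unfolding Y_def by measurable
  have Y_tail: "emeasure M {\<omega>\<in>space M. t \<le> Y k \<omega>} \<le> emeasure (Zdist (2 - q)) {t..}"
    if "k \<le> n" for k t
  proof -
    have "emeasure M {\<omega>\<in>space M. t \<le> Y k \<omega>} = emeasure M {\<omega>\<in>space M. t \<le> Y 0 \<omega>}"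
      unfolding Y_def
      by (rule emeasure_Collect_eq_of_distr_eq[OF assms(3)[OF that] assms(3)[OF le0] assms(5)[OF that]])
        measurable
    also have "\<dots> \<le> emeasure (Zdist (2 - q)) {t..}"
      unfolding Y_def c_def A_def
      by (rule tail_le_Zdist_tail[OF assms(1) assms(3)[OF le0] q \<open>a > 0\<close> assms(8)[OF \<open>a > 0\<close>]])
    finally show ?thesis .
  qed
  have Y_indep: "indep_vars (\<lambda>_. borel) Y {1..n}"
    unfolding Y_def
  proof (rule indep_vars_compose2[where Y="\<lambda>_ u. c * u - lnq (2 - q) A"])
    show "indep_vars (\<lambda>_. borel) Xs {1..n}"
      by (rule indep_vars_subset[OF assms(4)]) auto
  qed simp
  have "c \<ge> 0" "real n > 0"
    using \<open>a > 0\<close> \<open>n \<ge> 1\<close> by (simp_all add: c_def)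
  then have "{\<omega> \<in> space M. (\<Sum>k=1..n. Xs k \<omega>) / real n \<ge> x}
      \<subseteq> {\<omega>\<in>space M. y \<le> (\<Sum>k=1..n. Y k \<omega>) / real n}"
    by (auto simp: Y_def y_def sum_subtractf sum_distrib_left[symmetric] field_simps mult_left_mono)
  then have "measure M {\<omega> \<in> space M. (\<Sum>k=1..n. Xs k \<omega>) / real n \<ge> x}
      \<le> prob {\<omega>\<in>space M. y \<le> (\<Sum>k=1..n. Y k \<omega>) / real n}"
    using Y_rv by (intro finite_measure_mono) (auto intro!: borel_measurable_sum)
  also have "\<dots> \<le> eta_n (2 - q) n y"
    using \<open>n \<ge> 1\<close> q Y_indep Y_rv Y_tail by (intro prob_mean_ge_le_eta_n) auto
  finally show ?thesis
    by (simp add: y_def c_def A_def)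
qed

end
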